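(* Let $\mu$ be a positive Radon measure on $\mathbb R^n$ with power growth of exponent $0<\alpha\le n$. Let $I$ be a dyadic cube and $x\in I$. Then $$\int_I\frac{1}{|t-x|^{\alpha-1}}\,d\mu(t)\lesssim\ell(I)\,\rho_{\rm in}(I),$$ with implicit constant depending only on $n$ and $\alpha$.
   Context: $\mu$ has power growth of exponent $\alpha$ if $\mu(I)\lesssim\ell(I)^\alpha$ for every cube $I=\prod_{i=1}^n[a_i,a_i+l)$ ($\ell(I)=l$). Dyadic cubes are $\prod_{i=1}^n2^{-m}[j_i,j_i+1)$, $j_i,m\in\mathbb Z$. $\rho_{\rm in}(I)=\sup_{t\in I,\,0<\lambda<\ell(I)}\mu(I\cap B(t,\lambda))/\lambda^\alpha$, where $B(t,\lambda)$ is the open Euclidean ball of center $t$ and radius $\lambda$. *)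

theory Defs
  imports "HOL-Analysis.Analysis"
begin

definition cube :: "real ^ 'n \<Rightarrow> real \<Rightarrow> (real ^ 'n) set" where
  "cube a l = {y. \<forall>i. a $ i \<le> y $ i \<and> y $ i < a $ i + l}"

definition dyadic_cube :: "int \<Rightarrow> ('n \<Rightarrow> int) \<Rightarrow> (real ^ 'n) set" where
  "dyadic_cube m j = cube (\<chi> i. real_of_int (j i) * 2 powr (- real_of_int m)) (2 powr (- real_of_int m))"

text \<open>Positive Radon measure on R^n: a Borel measure, finite on compact sets
  (on R^n locally finite Borel measures are exactly the Radon measures).\<close>
definition radon_measure :: "(real ^ 'n) measure \<Rightarrow> bool" where
  "radon_measure M \<longleftrightarrow> sets M = sets borel \<and> (\<forall>K. compact K \<longrightarrow> emeasure M K < \<infinity>)"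

definition power_growth :: "(real ^ 'n) measure \<Rightarrow> real \<Rightarrow> bool" where
  "power_growth M \<alpha> \<longleftrightarrow> (\<exists>K. \<forall>a l. l > 0 \<longrightarrow> emeasure M (cube a l) \<le> ennreal (K * l powr \<alpha>))"

text \<open>rho_in(I) for a cube I of side length l.\<close>
definition rho_in :: "(real ^ 'n) measure \<Rightarrow> real \<Rightarrow> (real ^ 'n) set \<Rightarrow> real \<Rightarrow> real" where
  "rho_in M \<alpha> I l = Sup {measure M (I \<inter> ball t r) / r powr \<alpha> | t r. t \<in> I \<and> 0 < r \<and> r < l}"

end

theory Submission
  imports Defs
begin

(* Covering I by (n + 1)^n balls of radius n l / (n + 1) < l centred in I gives
   mu(I) <= (n + 1)^n rho_in(I) l^alpha, where l = l(I).  For alpha <= 1 the kernel is bounded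
   on I by (n l)^(1 - alpha), which already gives the estimate.  For alpha > 1, split I into the
   part where |t - x| >= l/2 and the dyadic shells l/2^(k+2) <= |t - x| < l/2^(k+1): on the
   k-th shell the kernel is at most (l/2^(k+2))^(1 - alpha), while
   mu(I \<inter> B(x, l/2^(k+1))) <= rho_in(I) (l/2^(k+1))^alpha, so the shells contribute the
   geometric series 2^(alpha - 1) l rho_in(I) sum_k 2^-(k+1). *)

lemma cube_in_borel: "cube a l \<in> sets borel"
proof -
  have "cube a l = (\<Inter>i. {y. a $ i \<le> y $ i} \<inter> {y. y $ i < a $ i + l})"
    by (auto simp: cube_def)
  also have "\<dots> \<in> sets borel"
    by (intro sets.finite_INT sets.Int borel_closed borel_open
        closed_halfspace_component_ge_cart open_halfspace_component_lt_cart) auto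
  finally show ?thesis .
qed

lemma ball_subset_cube: "ball t r \<subseteq> cube (t - (\<chi> i. r)) (2 * r)"
proof
  fix y assume "y \<in> ball t r"
  then have close: "\<bar>y $ i - t $ i\<bar> < r" for i
    using component_le_norm_cart[of "y - t" i] by (simp add: dist_norm norm_minus_commute)
  have "t $ i - r \<le> y $ i \<and> y $ i < t $ i + r" for i
    using close[of i] by linarith
  then show "y \<in> cube (t - (\<chi> i. r)) (2 * r)"
    by (simp add: cube_def add.commute)
qed

lemma power_growth_emeasure_inter_ball:
  fixes M :: "(real ^ 'n) measure" and I :: "(real ^ 'n) set"
  assumes "sets M = sets borel" and "power_growth M \<alpha>"
  obtains K where "0 \<le> K" and "\<And>t r. 0 < r \<Longrightarrow> emeasure M (I \<inter> ball t r) \<le> ennreal (K * r powr \<alpha>)"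
proof -
  obtain K where K: "\<And>a l. 0 < l \<Longrightarrow> emeasure M (cube a l) \<le> ennreal (K * l powr \<alpha>)"
    using assms(2) unfolding power_growth_def by blast
  have "emeasure M (I \<inter> ball t r) \<le> ennreal (max 0 K * 2 powr \<alpha> * r powr \<alpha>)" if "0 < r" for t r
  proof -
    have "emeasure M (I \<inter> ball t r) \<le> emeasure M (cube (t - (\<chi> i. r)) (2 * r))"
      using ball_subset_cube cube_in_borel assms(1) by (intro emeasure_mono) auto
    also have "\<dots> \<le> ennreal (K * (2 * r) powr \<alpha>)"
      using K that by simp
    also have "\<dots> \<le> ennreal (max 0 K * 2 powr \<alpha> * r powr \<alpha>)"
      using that by (intro ennreal_leI) (simp add: powr_mult mult_right_mono)
    finally show ?thesis .
  qed
  then show ?thesis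
    using that[of "max 0 K * 2 powr \<alpha>"] by auto
qed

lemma rho_in_upper:
  fixes M :: "(real ^ 'n) measure"
  assumes "sets M = sets borel" and "power_growth M \<alpha>"
    and "t \<in> I" and "0 < r" and "r < l"
  shows "measure M (I \<inter> ball t r) / r powr \<alpha> \<le> rho_in M \<alpha> I l"
proof -
  obtain K where "0 \<le> K" and "\<And>t r. 0 < r \<Longrightarrow> emeasure M (I \<inter> ball t r) \<le> ennreal (K * r powr \<alpha>)"
    using power_growth_emeasure_inter_ball[OF assms(1,2), where I = I] by blast
  then have K: "measure M (I \<inter> ball t r) \<le> K * r powr \<alpha>" if "0 < r" for t r
    using that by (simp add: measure_def enn2real_leI)
  let ?S = "{measure M (I \<inter> ball t r) / r powr \<alpha> | t r. t \<in> I \<and> 0 < r \<and> r < l}"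
  have "bdd_above ?S"
  proof (rule bdd_aboveI[of _ K])
    fix y assume "y \<in> ?S"
    then obtain t r where "y = measure M (I \<inter> ball t r) / r powr \<alpha>" and "0 < r"
      by blast
    then show "y \<le> K"
      using K[of r t] by (simp add: divide_le_eq)
  qed
  moreover have "measure M (I \<inter> ball t r) / r powr \<alpha> \<in> ?S"
    using assms(3-5) by blast
  ultimately show ?thesis
    unfolding rho_in_def by (rule cSup_upper[rotated])
qed

lemma rho_in_nonneg:
  fixes M :: "(real ^ 'n) measure"
  assumes "sets M = sets borel" and "power_growth M \<alpha>"
    and "I \<noteq> {}" and "0 < l"
  shows "0 \<le> rho_in M \<alpha> I l"
proof -
  obtain t where t: "t \<in> I" using assms(3) by blast
  have "0 \<le> measure M (I \<inter> ball t (l / 2)) / (l / 2) powr \<alpha>"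
    by simp
  also have "\<dots> \<le> rho_in M \<alpha> I l"
    by (rule rho_in_upper[OF assms(1,2) t]) (use assms(4) in auto)
  finally show ?thesis .
qed

lemma emeasure_inter_ball_le_rho_in:
  fixes M :: "(real ^ 'n) measure"
  assumes "sets M = sets borel" and "power_growth M \<alpha>"
    and "t \<in> I" and "0 < r" and "r < l"
  shows "emeasure M (I \<inter> ball t r) \<le> ennreal (rho_in M \<alpha> I l * r powr \<alpha>)"
proof -
  obtain K where "emeasure M (I \<inter> ball t r) \<le> ennreal (K * r powr \<alpha>)"
    using power_growth_emeasure_inter_ball[OF assms(1,2), where I = I] assms(4) by metis
  then have "emeasure M (I \<inter> ball t r) < \<infinity>"
    by (metis ennreal_less_top infinity_ennreal_def le_less_trans)
  then have "emeasure M (I \<inter> ball t r) = ennreal (measure M (I \<inter> ball t r))"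
    by (intro emeasure_eq_ennreal_measure) simp
  also have "\<dots> \<le> ennreal (rho_in M \<alpha> I l * r powr \<alpha>)"
    using rho_in_upper[OF assms] assms(4) by (intro ennreal_leI) (simp add: divide_le_eq)
  finally show ?thesis .
qed

lemma cube_covered_by_balls:
  fixes a :: "real ^ 'n" and l :: real
  assumes "0 < l"
  obtains P where "finite P" and "card P \<le> (CARD('n) + 1) ^ CARD('n)" and "P \<subseteq> cube a l"
    and "cube a l \<subseteq> (\<Union>p\<in>P. ball p (CARD('n) * l / (CARD('n) + 1)))"
proof -
  define m where "m = CARD('n) + 1"
  define grid where "grid = (\<Pi>\<^sub>E i\<in>(UNIV :: 'n set). {..<m})"
  define corner where "corner k = a + (\<chi> i. l / m * real (k i))" for k :: "'n \<Rightarrow> nat"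
  have m: "0 < real m" by (simp add: m_def)
  have "finite grid"
    unfolding grid_def by (intro finite_PiE) auto
  moreover have "card (corner ` grid) \<le> m ^ CARD('n)"
    using card_image_le[OF \<open>finite grid\<close>, of corner] by (simp add: grid_def card_PiE)
  moreover have "corner ` grid \<subseteq> cube a l"
  proof clarify
    fix k assume "k \<in> grid"
    then have "real (k i) < m" for i
      by (auto simp: grid_def PiE_iff)
    then have "l / m * real (k i) < l" for i
      using assms m by (simp add: field_simps)
    then show "corner k \<in> cube a l"
      using assms by (simp add: cube_def corner_def)
  qed
  moreover have "cube a l \<subseteq> (\<Union>k\<in>grid. ball (corner k) (CARD('n) * l / m))"
  proof
    fix y assume y: "y \<in> cube a l"
    define q where "q i = (y $ i - a $ i) * m / l" for i
    define k where "k i = nat \<lfloor>q i\<rfloor>" for i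
    have bounds: "a $ i \<le> y $ i \<and> y $ i < a $ i + l" for i
      using y by (simp add: cube_def)
    have lo: "a $ i \<le> y $ i" and hi: "y $ i - a $ i < l" for i
      using bounds[of i] by auto
    have q0: "0 \<le> q i" and qm: "q i < m" for i
      using lo[of i] mult_strict_right_mono[OF hi[of i] m] assms
      by (simp_all add: q_def divide_less_eq mult.commute)
    have k: "real (k i) \<le> q i" "q i < real (k i) + 1" and km: "k i < m" for i
      using q0[of i] qm[of i] by (auto simp: k_def nat_less_iff floor_less_iff)
    have "k \<in> grid"
      using km by (simp add: grid_def PiE_iff)
    have "\<bar>(y - corner k) $ i\<bar> < l / m" for i
    proof -
      have "(y - corner k) $ i = l / m * (q i - k i)"
        using assms m by (simp add: corner_def q_def field_simps)
      moreover have "l / m * (q i - k i) < l / m * 1"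
        using k[of i] assms m by (intro mult_strict_left_mono) auto
      ultimately show ?thesis
        using k[of i] assms m by simp
    qed
    then have "norm (y - corner k) < CARD('n) * l / m"
      using norm_le_l1_cart[of "y - corner k"] sum_strict_mono[of UNIV "\<lambda>i. \<bar>(y - corner k) $ i\<bar>" "\<lambda>_. l / m"]
      by simp
    with \<open>k \<in> grid\<close> show "y \<in> (\<Union>k\<in>grid. ball (corner k) (CARD('n) * l / m))"
      by (auto simp: dist_norm norm_minus_commute)
  qed
  ultimately show ?thesis
    using that[of "corner ` grid"] by (simp add: m_def)
qed

lemma emeasure_cube_le_rho_in:
  fixes M :: "(real ^ 'n) measure"
  assumes "sets M = sets borel" and "power_growth M \<alpha>" and "0 < \<alpha>" and "0 < l"
  shows "emeasure M (cube a l)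
    \<le> ennreal (real ((CARD('n) + 1) ^ CARD('n)) * rho_in M \<alpha> (cube a l) l * l powr \<alpha>)"
proof -
  let ?\<rho> = "rho_in M \<alpha> (cube a l) l"
  define r where "r = CARD('n) * l / (CARD('n) + 1)"
  obtain P where "finite P" and card: "card P \<le> (CARD('n) + 1) ^ CARD('n)"
    and "P \<subseteq> cube a l" and "cube a l \<subseteq> (\<Union>p\<in>P. ball p r)"
    unfolding r_def by (rule cube_covered_by_balls[OF assms(4)])
  then have cover: "cube a l \<subseteq> (\<Union>p\<in>P. cube a l \<inter> ball p r)"
    by blast
  have r: "0 < r" "r < l"
    using assms(4) by (auto simp: r_def field_simps)
  have "a \<in> cube a l"
    using assms(4) by (simp add: cube_def)
  then have "cube a l \<noteq> {}"
    by blast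
  then have \<rho>: "0 \<le> ?\<rho>"
    by (rule rho_in_nonneg[OF assms(1,2) _ assms(4)])
  have "cube a l \<inter> ball p r \<in> sets borel" for p
    using cube_in_borel by (rule sets.Int) simp
  then have balls: "(\<lambda>p. cube a l \<inter> ball p r) ` P \<subseteq> sets M"
    using assms(1) by blast
  have "emeasure M (cube a l) \<le> emeasure M (\<Union>p\<in>P. cube a l \<inter> ball p r)"
    using balls \<open>finite P\<close> by (intro emeasure_mono[OF cover] sets.finite_UN) blast+
  also have "\<dots> \<le> (\<Sum>p\<in>P. emeasure M (cube a l \<inter> ball p r))"
    by (rule emeasure_subadditive_finite[OF \<open>finite P\<close> balls])
  also have "\<dots> \<le> (\<Sum>p\<in>P. ennreal (?\<rho> * r powr \<alpha>))"
  proof (rule sum_mono)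
    fix p assume "p \<in> P"
    then show "emeasure M (cube a l \<inter> ball p r) \<le> ennreal (?\<rho> * r powr \<alpha>)"
      using \<open>P \<subseteq> cube a l\<close> r by (intro emeasure_inter_ball_le_rho_in[OF assms(1,2)]) auto
  qed
  also have "\<dots> = ennreal (card P * (?\<rho> * r powr \<alpha>))"
    using \<rho> by (simp add: ennreal_mult' ennreal_of_nat_eq_real_of_nat)
  also have "\<dots> \<le> ennreal ((CARD('n) + 1) ^ CARD('n) * (?\<rho> * l powr \<alpha>))"
  proof (rule ennreal_leI, rule mult_mono)
    show "real (card P) \<le> (CARD('n) + 1) ^ CARD('n)"
      using of_nat_mono[OF card] by simp
    show "?\<rho> * r powr \<alpha> \<le> ?\<rho> * l powr \<alpha>"
      using \<rho> r assms(3) by (intro mult_left_mono powr_mono2) auto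
    show "0 \<le> ((CARD('n) + 1) ^ CARD('n) :: real)"
      by simp
    show "0 \<le> ?\<rho> * r powr \<alpha>"
      using \<rho> by simp
  qed
  finally show ?thesis
    by (simp add: mult.assoc)
qed

lemma dist_le_in_cube:
  fixes t x :: "real ^ 'n" and l :: real
  assumes "t \<in> cube a l" and "x \<in> cube a l"
  shows "dist t x \<le> CARD('n) * l"
proof -
  have "\<bar>(t - x) $ i\<bar> \<le> l" for i
  proof -
    have "a $ i \<le> t $ i \<and> t $ i < a $ i + l" and "a $ i \<le> x $ i \<and> x $ i < a $ i + l"
      using assms by (simp_all add: cube_def)
    then show ?thesis
      by auto
  qed
  then have "(\<Sum>i\<in>UNIV. \<bar>(t - x) $ i\<bar>) \<le> CARD('n) * l"
    using sum_mono[of UNIV "\<lambda>i. \<bar>(t - x) $ i\<bar>" "\<lambda>_. l"] by simp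
  then show ?thesis
    using norm_le_l1_cart[of "t - x"] by (simp add: dist_norm)
qed

lemma cube_kernel_integral_le_small_exponent:
  fixes M :: "(real ^ 'n) measure"
  assumes "sets M = sets borel" and "power_growth M \<alpha>" and "0 < \<alpha>" and "\<alpha> \<le> 1"
    and "0 < l" and "x \<in> cube a l"
  shows "(\<integral>\<^sup>+ t \<in> cube a l. ennreal (1 / dist t x powr (\<alpha> - 1)) \<partial>M)
    \<le> ennreal (CARD('n) powr (1 - \<alpha>) * real ((CARD('n) + 1) ^ CARD('n)) * l * rho_in M \<alpha> (cube a l) l)"
proof -
  let ?\<rho> = "rho_in M \<alpha> (cube a l) l"
  let ?N = "real ((CARD('n) + 1) ^ CARD('n))"
  define c where "c = (CARD('n) * l) powr (1 - \<alpha>)"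
  have kernel: "1 / dist t x powr (\<alpha> - 1) \<le> c" if "t \<in> cube a l" for t
  proof -
    have "1 / dist t x powr (\<alpha> - 1) = dist t x powr (1 - \<alpha>)"
      using powr_minus_divide[of "dist t x" "\<alpha> - 1"] by simp
    also have "\<dots> \<le> c"
      unfolding c_def using assms(4) dist_le_in_cube[OF that assms(6)] by (intro powr_mono2) auto
    finally show ?thesis .
  qed
  have "(\<integral>\<^sup>+ t \<in> cube a l. ennreal (1 / dist t x powr (\<alpha> - 1)) \<partial>M)
      \<le> (\<integral>\<^sup>+ t. ennreal c * indicator (cube a l) t \<partial>M)"
    using kernel by (intro nn_integral_mono) (auto split: split_indicator intro: ennreal_leI)
  also have "\<dots> = ennreal c * emeasure M (cube a l)"
    using assms(1) cube_in_borel by (intro nn_integral_cmult_indicator) simp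
  also have "\<dots> \<le> ennreal c * ennreal (?N * ?\<rho> * l powr \<alpha>)"
    using emeasure_cube_le_rho_in[OF assms(1-3,5)] by (rule mult_left_mono) simp
  also have "\<dots> = ennreal (CARD('n) powr (1 - \<alpha>) * ?N * l * ?\<rho>)"
  proof -
    have "c * (?N * ?\<rho> * l powr \<alpha>) = (c * l powr \<alpha>) * ?N * ?\<rho>"
      by (simp add: mult_ac)
    also have "c * l powr \<alpha> = CARD('n) powr (1 - \<alpha>) * l"
      using assms(5) by (simp add: c_def powr_mult mult.assoc powr_add[symmetric])
    finally have eq: "c * (?N * ?\<rho> * l powr \<alpha>) = CARD('n) powr (1 - \<alpha>) * ?N * l * ?\<rho>"
      by (simp add: mult_ac)
    have "0 \<le> c"
      by (simp add: c_def)
    then show ?thesis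
      unfolding ennreal_mult'[OF \<open>0 \<le> c\<close>, symmetric] eq by simp
  qed
  finally show ?thesis .
qed

lemma dyadic_scale_exists:
  fixes d l :: real
  assumes "0 < d" and "d < l"
  obtains k :: nat where "l / 2 ^ Suc k \<le> d" and "d < l / 2 ^ k"
proof -
  let ?P = "\<lambda>k::nat. l / 2 ^ Suc k \<le> d"
  obtain n :: nat where "l / d < 2 ^ n"
    using real_arch_pow[of 2 "l / d"] by auto
  then have "?P n"
    using assms by (simp add: divide_simps mult.commute)
  then have least: "?P (LEAST k. ?P k)"
    by (rule LeastI)
  have "d < l / 2 ^ (LEAST k. ?P k)"
  proof (cases "LEAST k. ?P k")
    case 0
    then show ?thesis using assms by simp
  next
    case (Suc j)
    then have "\<not> ?P j"
      using not_less_Least[of j ?P] by simp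
    then show ?thesis using Suc by simp
  qed
  with least show ?thesis
    using that by blast
qed

lemma inverse_dist_powr_le_dyadic_sum:
  fixes t x :: "'a :: metric_space"
  assumes "0 < l" and "0 \<le> \<beta>"
  shows "ennreal (1 / dist t x powr \<beta>)
    \<le> ennreal (1 / (l / 2) powr \<beta>)
      + (\<Sum>k. ennreal (1 / (l / 2 ^ (k + 2)) powr \<beta>) * indicator (ball x (l / 2 ^ (k + 1))) t)"
    (is "_ \<le> ennreal ?A + ?S")
proof (cases "l / 2 \<le> dist t x")
  case True
  then have "1 / dist t x powr \<beta> \<le> ?A"
    using assms by (intro divide_left_mono powr_mono2 mult_pos_pos) auto
  then show ?thesis
    by (intro add_increasing2 ennreal_leI) auto
next
  case far: False
  show ?thesis
  proof (cases "t = x")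
    case False
    then have "0 < dist t x"
      by simp
    then obtain k where k: "l / 2 / 2 ^ Suc k \<le> dist t x" "dist t x < l / 2 / 2 ^ k"
      using dyadic_scale_exists[of "dist t x" "l / 2"] far by force
    then have "1 / dist t x powr \<beta> \<le> 1 / (l / 2 ^ (k + 2)) powr \<beta>"
      using assms by (intro divide_left_mono powr_mono2 mult_pos_pos) (auto simp: field_simps)
    moreover have "t \<in> ball x (l / 2 ^ (k + 1))"
      using k by (simp add: dist_commute field_simps)
    ultimately have "ennreal (1 / dist t x powr \<beta>)
        \<le> ennreal (1 / (l / 2 ^ (k + 2)) powr \<beta>) * indicator (ball x (l / 2 ^ (k + 1))) t"
      by (simp add: ennreal_leI)
    also have "\<dots> \<le> ?S"
      using sum_le_suminf[OF summableI, of "{k}"] by simp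
    finally show ?thesis
      by (simp add: add_increasing)
  qed simp \<comment> \<open>at \<open>t = x\<close> the left-hand side is \<open>1 / 0 = 0\<close>\<close>
qed

lemma set_nn_integral_const_plus_suminf_indicator:
  fixes a :: ennreal and c :: "nat \<Rightarrow> ennreal"
  assumes "I \<in> sets M" and "\<And>k. B k \<in> sets M"
  shows "(\<integral>\<^sup>+ t \<in> I. a + (\<Sum>k. c k * indicator (B k) t) \<partial>M)
    = a * emeasure M I + (\<Sum>k. c k * emeasure M (I \<inter> B k))"
proof -
  have "(\<integral>\<^sup>+ t \<in> I. a + (\<Sum>k. c k * indicator (B k) t) \<partial>M)
      = (\<integral>\<^sup>+ t. a * indicator I t + (\<Sum>k. c k * indicator (I \<inter> B k) t) \<partial>M)"
  proof (rule nn_integral_cong)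
    fix t
    show "(a + (\<Sum>k. c k * indicator (B k) t)) * indicator I t
        = a * indicator I t + (\<Sum>k. c k * indicator (I \<inter> B k) t)"
      by (cases "t \<in> I") (simp_all add: indicator_inter_arith)
  qed
  also have "\<dots> = a * emeasure M I + (\<Sum>k. c k * emeasure M (I \<inter> B k))"
    using assms by (simp add: nn_integral_add nn_integral_suminf nn_integral_cmult_indicator)
  finally show ?thesis .
qed

lemma powr_succ_div_half_powr:
  fixes s \<beta> :: real
  assumes "0 < s"
  shows "s powr (\<beta> + 1) / (s / 2) powr \<beta> = 2 powr \<beta> * s"
  using assms by (simp add: powr_add powr_divide)

lemma cube_kernel_integral_le_large_exponent:
  fixes M :: "(real ^ 'n) measure"
  assumes "sets M = sets borel" and "power_growth M \<alpha>" and "1 < \<alpha>" and "0 < l"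
    and "x \<in> cube a l"
  shows "(\<integral>\<^sup>+ t \<in> cube a l. ennreal (1 / dist t x powr (\<alpha> - 1)) \<partial>M)
    \<le> ennreal (2 powr (\<alpha> - 1) * (real ((CARD('n) + 1) ^ CARD('n)) + 1) * l * rho_in M \<alpha> (cube a l) l)"
proof -
  let ?\<rho> = "rho_in M \<alpha> (cube a l) l"
  let ?N = "real ((CARD('n) + 1) ^ CARD('n))"
  let ?I = "cube a l"
  define \<beta> where "\<beta> = \<alpha> - 1"
  define s where "s k = l / 2 ^ (k + 1)" for k :: nat
  have \<alpha>: "\<alpha> = \<beta> + 1" and "0 \<le> \<beta>"
    using assms(3) by (auto simp: \<beta>_def)
  have s: "0 < s k" "s k < l" for k
  proof -
    have "(1 :: real) < 2 ^ (k + 1)"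
      by (rule one_less_power) auto
    then show "0 < s k" "s k < l"
      using assms(4) by (simp_all add: s_def field_simps)
  qed
  have \<rho>: "0 \<le> ?\<rho>"
    using rho_in_nonneg[OF assms(1,2) _ assms(4)] assms(5) by blast
  have "(\<integral>\<^sup>+ t \<in> ?I. ennreal (1 / dist t x powr \<beta>) \<partial>M)
      \<le> (\<integral>\<^sup>+ t \<in> ?I. ennreal (1 / (l / 2) powr \<beta>)
            + (\<Sum>k. ennreal (1 / (s k / 2) powr \<beta>) * indicator (ball x (s k)) t) \<partial>M)"
    using inverse_dist_powr_le_dyadic_sum[OF assms(4) \<open>0 \<le> \<beta>\<close>]
    by (intro nn_integral_mono mult_right_mono) (simp_all add: s_def field_simps)
  also have "\<dots> = ennreal (1 / (l / 2) powr \<beta>) * emeasure M ?I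
      + (\<Sum>k. ennreal (1 / (s k / 2) powr \<beta>) * emeasure M (?I \<inter> ball x (s k)))"
    using assms(1) cube_in_borel by (intro set_nn_integral_const_plus_suminf_indicator) auto
  also have "\<dots> \<le> ennreal (2 powr \<beta> * ?N * l * ?\<rho>) + ennreal (2 powr \<beta> * l * ?\<rho>)"
  proof (rule add_mono)
    have "ennreal (1 / (l / 2) powr \<beta>) * emeasure M ?I
        \<le> ennreal (1 / (l / 2) powr \<beta>) * ennreal (?N * ?\<rho> * l powr \<alpha>)"
      using emeasure_cube_le_rho_in[OF assms(1,2) _ assms(4)] assms(3) by (intro mult_left_mono) auto
    also have "\<dots> = ennreal (l powr \<alpha> / (l / 2) powr \<beta> * ?N * ?\<rho>)"
      by (simp add: ennreal_mult'[symmetric] mult_ac)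
    also have "l powr \<alpha> / (l / 2) powr \<beta> = 2 powr \<beta> * l"
      unfolding \<alpha> using assms(4) by (rule powr_succ_div_half_powr)
    finally show "ennreal (1 / (l / 2) powr \<beta>) * emeasure M ?I \<le> ennreal (2 powr \<beta> * ?N * l * ?\<rho>)"
      by (simp add: mult_ac)
  next
    have "ennreal (1 / (s k / 2) powr \<beta>) * emeasure M (?I \<inter> ball x (s k))
        \<le> ennreal (2 powr \<beta> * l * ?\<rho> * (1 / 2) ^ Suc k)" for k
    proof -
      have "ennreal (1 / (s k / 2) powr \<beta>) * emeasure M (?I \<inter> ball x (s k))
          \<le> ennreal (1 / (s k / 2) powr \<beta>) * ennreal (?\<rho> * s k powr \<alpha>)"
        using emeasure_inter_ball_le_rho_in[OF assms(1,2,5) s] by (rule mult_left_mono) simp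
      also have "\<dots> = ennreal (s k powr \<alpha> / (s k / 2) powr \<beta> * ?\<rho>)"
        by (simp add: ennreal_mult'[symmetric] mult_ac)
      also have "s k powr \<alpha> / (s k / 2) powr \<beta> = 2 powr \<beta> * s k"
        unfolding \<alpha> using s(1) by (rule powr_succ_div_half_powr)
      finally show ?thesis
        by (simp add: s_def power_one_over mult_ac)
    qed
    then have "(\<Sum>k. ennreal (1 / (s k / 2) powr \<beta>) * emeasure M (?I \<inter> ball x (s k)))
        \<le> (\<Sum>k. ennreal (2 powr \<beta> * l * ?\<rho> * (1 / 2) ^ Suc k))"
      by (intro suminf_le) auto
    also have "\<dots> = ennreal (2 powr \<beta> * l * ?\<rho> * 1)"
      using \<rho> assms(4) by (intro suminf_ennreal_eq sums_mult power_half_series) auto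
    finally show "(\<Sum>k. ennreal (1 / (s k / 2) powr \<beta>) * emeasure M (?I \<inter> ball x (s k)))
        \<le> ennreal (2 powr \<beta> * l * ?\<rho>)"
      by simp
  qed
  also have "\<dots> = ennreal (2 powr \<beta> * (?N + 1) * l * ?\<rho>)"
    using \<rho> assms(4) by (simp add: ennreal_plus[symmetric] algebra_simps del: ennreal_plus)
  finally show ?thesis
    by (simp add: \<beta>_def add.commute)
qed

lemma cube_kernel_integral_le:
  fixes M :: "(real ^ 'n) measure"
  assumes "sets M = sets borel" and "power_growth M \<alpha>" and "0 < \<alpha>" and "0 < l"
    and "x \<in> cube a l"
  defines "N \<equiv> real ((CARD('n) + 1) ^ CARD('n))"
  shows "(\<integral>\<^sup>+ t \<in> cube a l. ennreal (1 / dist t x powr (\<alpha> - 1)) \<partial>M)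
    \<le> ennreal ((CARD('n) powr (1 - \<alpha>) * N + 2 powr (\<alpha> - 1) * (N + 1)) * l * rho_in M \<alpha> (cube a l) l)"
proof -
  have scale: "ennreal (\<kappa> * l * rho_in M \<alpha> (cube a l) l)
      \<le> ennreal ((CARD('n) powr (1 - \<alpha>) * N + 2 powr (\<alpha> - 1) * (N + 1)) * l * rho_in M \<alpha> (cube a l) l)"
    if "\<kappa> \<le> CARD('n) powr (1 - \<alpha>) * N + 2 powr (\<alpha> - 1) * (N + 1)" for \<kappa>
    using that rho_in_nonneg[OF assms(1,2) _ assms(4)] assms(4,5)
    by (intro ennreal_leI mult_right_mono) auto
  show ?thesis
  proof (cases "\<alpha> \<le> 1")
    case True
    have "CARD('n) powr (1 - \<alpha>) * N \<le> CARD('n) powr (1 - \<alpha>) * N + 2 powr (\<alpha> - 1) * (N + 1)"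
      by (intro add_increasing2 mult_nonneg_nonneg) (auto simp: N_def)
    then show ?thesis
      using cube_kernel_integral_le_small_exponent[OF assms(1-3) True assms(4,5), folded N_def]
      by (elim order_trans scale)
  next
    case False
    then have "1 < \<alpha>"
      by simp
    have "2 powr (\<alpha> - 1) * (N + 1) \<le> CARD('n) powr (1 - \<alpha>) * N + 2 powr (\<alpha> - 1) * (N + 1)"
      by (intro add_increasing mult_nonneg_nonneg) (auto simp: N_def)
    then show ?thesis
      using cube_kernel_integral_le_large_exponent[OF assms(1,2) \<open>1 < \<alpha>\<close> assms(4,5), folded N_def]
      by (elim order_trans scale)
  qed
qed

theorem lemma5p1:
  fixes \<alpha> :: real
  assumes "0 < \<alpha>" and "\<alpha> \<le> real CARD('n)"
  shows "\<exists>C>0. \<forall>(M :: (real ^ 'n) measure) (m :: int) (j :: 'n \<Rightarrow> int) (x :: real ^ 'n).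
           radon_measure M \<longrightarrow> power_growth M \<alpha> \<longrightarrow> x \<in> dyadic_cube m j \<longrightarrow>
           (\<integral>\<^sup>+ t \<in> dyadic_cube m j. ennreal (1 / dist t x powr (\<alpha> - 1)) \<partial>M)
             \<le> ennreal (C * 2 powr (- real_of_int m) * rho_in M \<alpha> (dyadic_cube m j) (2 powr (- real_of_int m)))"
proof -
  let ?N = "real ((CARD('n) + 1) ^ CARD('n))"
  let ?C = "CARD('n) powr (1 - \<alpha>) * ?N + 2 powr (\<alpha> - 1) * (?N + 1)"
  have "0 < ?C"
    by (intro add_nonneg_pos mult_pos_pos add_nonneg_pos) auto
  moreover have "(\<integral>\<^sup>+ t \<in> dyadic_cube m j. ennreal (1 / dist t x powr (\<alpha> - 1)) \<partial>M)
      \<le> ennreal (?C * 2 powr (- real_of_int m) * rho_in M \<alpha> (dyadic_cube m j) (2 powr (- real_of_int m)))"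
    if "radon_measure M" and "power_growth M \<alpha>" and "x \<in> dyadic_cube m j"
    for M :: "(real ^ 'n) measure" and m j and x :: "real ^ 'n"
  proof -
    define l where "l = (2 :: real) powr (- real_of_int m)"
    define a where "a = (\<chi> i. real_of_int (j i) * l :: real ^ 'n)"
    have cube: "dyadic_cube m j = cube a l"
      by (simp add: dyadic_cube_def a_def l_def)
    have "sets M = sets borel"
      using that(1) by (simp add: radon_measure_def)
    from cube_kernel_integral_le[OF this that(2) assms(1), of l x a] that(3)
    show ?thesis
      by (simp add: cube l_def)
  qed
  ultimately show ?thesis
    by blast
qed

end
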